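(* Let $\mathcal{C}$ be a linear code of length $n$ over $\mathbb{F}_{q^m}$. The generalized subfield subcodes of $\mathcal{C}$ (over all choices of $\mathcal{B},u,f,\pi$) are exactly the codes obtained as follows: choose nonzero $a_1,\dots,a_n\in\mathbb{F}_{q^m}$ and let $V_i=\mathbb{F}_qa_i$ (an $\mathbb{F}_q$-subspace of dimension 1); set $\mathcal{C}'=\mathcal{C}\cap(V_1\times\cdots\times V_n)$; identify each $V_i$ with $\mathbb{F}_q$ via $\lambda a_i\mapsto\lambda$, giving the $\mathbb{F}_q$-linear code $C=\{(\lambda_1,\dots,\lambda_n)\in\mathbb{F}_q^n:(\lambda_1a_1,\dots,\lambda_na_n)\in\mathcal{C}'\}$; choose a permutation $\pi$ of the $n$ coordinates and return $\pi(C)$.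
   Context: For a basis $\mathcal{B}=(b_1,\dots,b_m)$ of $\mathbb{F}_{q^m}$ over $\mathbb{F}_q$, $\phi_{\mathcal{B}}(\sum_ix_ib_i)=(x_1,\dots,x_m)$ and $Im_q(\mathcal{C})=\{(\phi_{\mathcal{B}}(c_1)|\cdots|\phi_{\mathcal{B}}(c_n)):c\in\mathcal{C}\}\subseteq(\mathbb{F}_q^m)^n$. For $f=(f_1,\dots,f_n)\in GL_q(m)^n$ ($\mathbb{F}_q$-linear automorphisms of $\mathbb{F}_q^m$) and a permutation $\pi$ of $\{1,\dots,n\}$, $mon=\pi\circ f$ applies $f_i$ to the $i$-th block and then permutes the blocks by $\pi$. For $u=(u_1,\dots,u_n)\in\{1,\dots,m\}^n$ and $D\subseteq(\mathbb{F}_q^m)^n$, with $x_{j,l}$ the $l$-th coordinate of block $j$ of $x$, $S_u(D)=\{(x_{1,u_1},\dots,x_{n,u_n}):x\in D,\ x_{j,l}=0\ \forall j,\ \forall l\neq u_j\}\subseteq\mathbb{F}_q^n$. The generalized subfield subcode of $\mathcal{C}$ relative to $\mathcal{B},u,mon$ is $S_u(mon(Im_q(\mathcal{C})))$. *)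

theory Defs
  imports "HOL-Combinatorics.Permutations"
begin

text \<open>Conventions: the field F_{q^m} is a finite field type 'K; F_q is a subfield
  F of 'K (given as a set). Indices are 0-based: coordinates 0..<n, block
  coordinates 0..<m.\<close>

definition subfield :: "'K::field set \<Rightarrow> bool" where
  "subfield F \<longleftrightarrow> 0 \<in> F \<and> 1 \<in> F \<and>
     (\<forall>x\<in>F. \<forall>y\<in>F. x + y \<in> F \<and> x * y \<in> F) \<and>
     (\<forall>x\<in>F. - x \<in> F \<and> inverse x \<in> F)"

definition vecs :: "'K::zero set \<Rightarrow> nat \<Rightarrow> (nat \<Rightarrow> 'K) set" where
  "vecs A N = {v. (\<forall>i<N. v i \<in> A) \<and> (\<forall>i\<ge>N. v i = 0)}"

definition linear_code :: "nat \<Rightarrow> (nat \<Rightarrow> 'K::field) set \<Rightarrow> bool" where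
  "linear_code n C \<longleftrightarrow> C \<subseteq> vecs UNIV n \<and> (\<lambda>_. 0) \<in> C \<and>
     (\<forall>x\<in>C. \<forall>y\<in>C. (\<lambda>i. x i + y i) \<in> C) \<and>
     (\<forall>a. \<forall>x\<in>C. (\<lambda>i. a * x i) \<in> C)"

definition is_basis :: "'K::field set \<Rightarrow> nat \<Rightarrow> 'K list \<Rightarrow> bool" where
  "is_basis F m B \<longleftrightarrow> length B = m \<and>
     (\<forall>x. \<exists>!c. c \<in> vecs F m \<and> x = (\<Sum>l<m. c l * B ! l))"

definition phi :: "'K::field set \<Rightarrow> nat \<Rightarrow> 'K list \<Rightarrow> 'K \<Rightarrow> (nat \<Rightarrow> 'K)" where
  "phi F m B x = (THE c. c \<in> vecs F m \<and> x = (\<Sum>l<m. c l * B ! l))"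

text \<open>Im_q(C): elements of (F_q^m)^n as x j l (block j, coordinate l).\<close>
definition Im_q :: "'K::field set \<Rightarrow> nat \<Rightarrow> nat \<Rightarrow> 'K list \<Rightarrow> (nat \<Rightarrow> 'K) set
    \<Rightarrow> (nat \<Rightarrow> nat \<Rightarrow> 'K) set" where
  "Im_q F m n B C = {(\<lambda>j. if j < n then phi F m B (c j) else (\<lambda>_. 0)) | c. c \<in> C}"

definition GL_q :: "'K::field set \<Rightarrow> nat \<Rightarrow> ((nat \<Rightarrow> 'K) \<Rightarrow> (nat \<Rightarrow> 'K)) \<Rightarrow> bool" where
  "GL_q F m g \<longleftrightarrow> bij_betw g (vecs F m) (vecs F m) \<and>
     (\<forall>x\<in>vecs F m. \<forall>y\<in>vecs F m. g (\<lambda>l. x l + y l) = (\<lambda>l. g x l + g y l)) \<and>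
     (\<forall>a\<in>F. \<forall>x\<in>vecs F m. g (\<lambda>l. a * x l) = (\<lambda>l. a * g x l))"

text \<open>mon = pi o f: block i is mapped by f i and moved to position pi i.\<close>
definition mon :: "nat \<Rightarrow> (nat \<Rightarrow> (nat \<Rightarrow> 'K) \<Rightarrow> (nat \<Rightarrow> 'K)) \<Rightarrow> (nat \<Rightarrow> nat)
    \<Rightarrow> (nat \<Rightarrow> nat \<Rightarrow> 'K::zero) \<Rightarrow> (nat \<Rightarrow> nat \<Rightarrow> 'K)" where
  "mon n f \<pi> x = (\<lambda>j. if j < n then f (inv \<pi> j) (x (inv \<pi> j)) else (\<lambda>_. 0))"

definition S_u :: "nat \<Rightarrow> nat \<Rightarrow> (nat \<Rightarrow> nat) \<Rightarrow> (nat \<Rightarrow> nat \<Rightarrow> 'K::zero) set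
    \<Rightarrow> (nat \<Rightarrow> 'K) set" where
  "S_u m n u D = {(\<lambda>j. if j < n then x j (u j) else 0) | x.
      x \<in> D \<and> (\<forall>j<n. \<forall>l<m. l \<noteq> u j \<longrightarrow> x j l = 0)}"

definition gen_subfield_subcode :: "'K::field set \<Rightarrow> nat \<Rightarrow> nat \<Rightarrow> (nat \<Rightarrow> 'K) set
    \<Rightarrow> 'K list \<Rightarrow> (nat \<Rightarrow> nat) \<Rightarrow> (nat \<Rightarrow> (nat \<Rightarrow> 'K) \<Rightarrow> (nat \<Rightarrow> 'K)) \<Rightarrow> (nat \<Rightarrow> nat)
    \<Rightarrow> (nat \<Rightarrow> 'K) set" where
  "gen_subfield_subcode F m n C B u f \<pi> = S_u m n u ((mon n f \<pi>) ` (Im_q F m n B C))"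

definition V_prod :: "'K::field set \<Rightarrow> nat \<Rightarrow> (nat \<Rightarrow> 'K) \<Rightarrow> (nat \<Rightarrow> 'K) set" where
  "V_prod F n a = {v \<in> vecs UNIV n. \<forall>i<n. \<exists>c\<in>F. v i = c * a i}"

definition scaled_code :: "'K::field set \<Rightarrow> nat \<Rightarrow> (nat \<Rightarrow> 'K) set \<Rightarrow> (nat \<Rightarrow> 'K)
    \<Rightarrow> (nat \<Rightarrow> 'K) set" where
  "scaled_code F n C a = {l \<in> vecs F n. (\<lambda>i. l i * a i) \<in> C \<inter> V_prod F n a}"

text \<open>pi(C): coordinate i is moved to position pi i.\<close>
definition perm_code :: "(nat \<Rightarrow> nat) \<Rightarrow> (nat \<Rightarrow> 'K) set \<Rightarrow> (nat \<Rightarrow> 'K) set" where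
  "perm_code \<pi> C = (\<lambda>v. v \<circ> inv \<pi>) ` C"

end

(* A generalized subfield subcode keeps, in block i, only those codewords c for which
   f i (phi (c i)) lies on the coordinate axis u (pi i). As f i o phi is an F-linear bijection,
   the preimage of this axis is the line F * a i, where f i (phi (a i)) is the unit vector, and
   the surviving coordinate of mu * a i is mu; so the subcode is pi applied to the code scaled
   by a. Conversely every nonzero a arises, from u = 0 and f i = multiplication by B ! 0 / a i
   in the coordinates of a basis B, which exists because |F|^m = |K|. *)

theory Submission
  imports Defs
begin

definition lincomb :: "'K::field list \<Rightarrow> nat \<Rightarrow> (nat \<Rightarrow> 'K) \<Rightarrow> 'K" where
  "lincomb B m v = (\<Sum>l<m. v l * B ! l)"

definition unit_vec :: "nat \<Rightarrow> nat \<Rightarrow> 'K::{zero,one}" where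
  "unit_vec k = (\<lambda>l. if l = k then 1 else 0)"

lemma subfield_zero: "subfield F \<Longrightarrow> 0 \<in> F"
  and subfield_one: "subfield F \<Longrightarrow> 1 \<in> F"
  and subfield_add: "subfield F \<Longrightarrow> x \<in> F \<Longrightarrow> y \<in> F \<Longrightarrow> x + y \<in> F"
  and subfield_mult: "subfield F \<Longrightarrow> x \<in> F \<Longrightarrow> y \<in> F \<Longrightarrow> x * y \<in> F"
  and subfield_diff: "subfield F \<Longrightarrow> x \<in> F \<Longrightarrow> y \<in> F \<Longrightarrow> x - y \<in> F"
  and subfield_divide: "subfield F \<Longrightarrow> x \<in> F \<Longrightarrow> y \<in> F \<Longrightarrow> x / y \<in> F"
  unfolding subfield_def by (metis diff_conv_add_uminus divide_inverse)+

lemma vecsI: "(\<And>i. i < N \<Longrightarrow> v i \<in> A) \<Longrightarrow> (\<And>i. N \<le> i \<Longrightarrow> v i = 0) \<Longrightarrow> v \<in> vecs A N"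
  by (simp add: vecs_def)

lemma vecs_in: "v \<in> vecs A N \<Longrightarrow> i < N \<Longrightarrow> v i \<in> A"
  and vecs_zero: "v \<in> vecs A N \<Longrightarrow> N \<le> i \<Longrightarrow> v i = 0"
  by (auto simp: vecs_def)

lemma zero_in_vecs: "subfield F \<Longrightarrow> (\<lambda>_. 0) \<in> vecs F m"
  by (rule vecsI) (auto simp: subfield_zero)

lemma unit_vec_in_vecs: "subfield F \<Longrightarrow> k < m \<Longrightarrow> unit_vec k \<in> vecs F m"
  by (rule vecsI) (auto simp: unit_vec_def subfield_zero subfield_one)

lemma add_in_vecs:
  "subfield F \<Longrightarrow> x \<in> vecs F m \<Longrightarrow> y \<in> vecs F m \<Longrightarrow> (\<lambda>l. x l + y l) \<in> vecs F m"
  by (rule vecsI) (auto simp: vecs_in vecs_zero subfield_add)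

lemma scale_in_vecs:
  "subfield F \<Longrightarrow> a \<in> F \<Longrightarrow> x \<in> vecs F m \<Longrightarrow> (\<lambda>l. a * x l) \<in> vecs F m"
  by (rule vecsI) (auto simp: vecs_in vecs_zero subfield_mult)

lemma vecs_0: "vecs F 0 = {\<lambda>_. 0}"
  by (auto simp: vecs_def)

lemma vecs_Suc: "vecs F (Suc k) = (\<lambda>(v, c). v(k := c)) ` (vecs F k \<times> F)"
proof (rule set_eqI iffI)+
  fix w assume w: "w \<in> vecs F (Suc k)"
  then have "(w(k := 0), w k) \<in> vecs F k \<times> F" by (auto simp: vecs_def)
  then show "w \<in> (\<lambda>(v, c). v(k := c)) ` (vecs F k \<times> F)"
    by (rule rev_image_eqI) simp
qed (auto simp: vecs_def)

lemma inj_on_vecs_Suc: "inj_on (\<lambda>(v, c). v(k := c)) (vecs F k \<times> F)"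
proof (rule inj_onI, clarsimp)
  fix v c v' c' assume v: "v \<in> vecs F k" and v': "v' \<in> vecs F k" and e: "v(k := c) = v'(k := c')"
  have "v = v'"
  proof
    fix l show "v l = v' l"
      using fun_cong[OF e, of l] vecs_zero[OF v, of k] vecs_zero[OF v', of k] by (cases "l = k") auto
  qed
  then show "v = v' \<and> c = c'" using fun_cong[OF e, of k] by simp
qed

lemma card_vecs: "finite F \<Longrightarrow> card (vecs F k) = card F ^ k"
proof (induction k)
  case (Suc k)
  then show ?case
    by (simp add: vecs_Suc card_image[OF inj_on_vecs_Suc] card_cartesian_product)
qed (simp add: vecs_0)

lemma lincomb_add: "lincomb B m (\<lambda>l. x l + y l) = lincomb B m x + lincomb B m y"
  by (simp add: lincomb_def distrib_right sum.distrib)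

lemma lincomb_scale: "lincomb B m (\<lambda>l. a * x l) = a * lincomb B m x"
  by (simp add: lincomb_def sum_distrib_left mult.assoc)

lemma lincomb_unit_vec:
  assumes "k < m"
  shows "lincomb B m (unit_vec k) = B ! k"
proof -
  have "lincomb B m (unit_vec k) = (\<Sum>l<m. if l = k then B ! l else 0)"
    unfolding lincomb_def unit_vec_def by (rule sum.cong) auto
  then show ?thesis
    using assms by simp
qed

lemma lincomb_snoc: "length B = k \<Longrightarrow> lincomb (B @ [b]) (Suc k) v = lincomb B k v + v k * b"
  by (simp add: lincomb_def nth_append)

lemma lincomb_upd_last: "lincomb B k (v(k := c)) = lincomb B k v"
  by (simp add: lincomb_def)

lemma
  assumes "is_basis F m B"
  shows phi_in_vecs: "phi F m B x \<in> vecs F m"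
    and lincomb_phi: "lincomb B m (phi F m B x) = x"
proof -
  have "\<exists>!c. c \<in> vecs F m \<and> x = (\<Sum>l<m. c l * B ! l)"
    using assms by (simp add: is_basis_def)
  from theI'[OF this] show "phi F m B x \<in> vecs F m" "lincomb B m (phi F m B x) = x"
    by (auto simp: phi_def lincomb_def)
qed

lemma phi_lincomb:
  assumes "is_basis F m B" "c \<in> vecs F m"
  shows "phi F m B (lincomb B m c) = c"
proof -
  have unique: "\<exists>!d. d \<in> vecs F m \<and> lincomb B m c = (\<Sum>l<m. d l * B ! l)"
    using assms(1) by (simp add: is_basis_def)
  show ?thesis
    unfolding phi_def
    by (rule the1_equality[OF unique]) (use assms(2) in \<open>simp add: lincomb_def\<close>)
qed

lemma phi_inj:
  assumes "is_basis F m B" "phi F m B x = phi F m B y"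
  shows "x = y"
proof -
  have "x = lincomb B m (phi F m B y)"
    using lincomb_phi[OF assms(1), of x] assms(2) by simp
  then show ?thesis
    by (simp add: lincomb_phi[OF assms(1)])
qed

lemma phi_add:
  assumes "subfield F" "is_basis F m B"
  shows "phi F m B (x + y) = (\<lambda>l. phi F m B x l + phi F m B y l)"
proof -
  have "x + y = lincomb B m (\<lambda>l. phi F m B x l + phi F m B y l)"
    by (simp add: lincomb_add lincomb_phi assms(2))
  then show ?thesis
    using phi_lincomb[OF assms(2) add_in_vecs[OF assms(1) phi_in_vecs phi_in_vecs]] assms(2)
    by simp
qed

lemma phi_scale:
  assumes "subfield F" "is_basis F m B" "a \<in> F"
  shows "phi F m B (a * x) = (\<lambda>l. a * phi F m B x l)"
proof -
  have "a * x = lincomb B m (\<lambda>l. a * phi F m B x l)"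
    by (simp add: lincomb_scale lincomb_phi assms(2))
  then show ?thesis
    using phi_lincomb[OF assms(2) scale_in_vecs[OF assms(1,3) phi_in_vecs[OF assms(2)]]] by simp
qed

lemma phi_zero:
  assumes "subfield F" "is_basis F m B"
  shows "phi F m B 0 = (\<lambda>_. 0)"
  using phi_lincomb[OF assms(2) zero_in_vecs[OF assms(1)]] by (simp add: lincomb_def)

lemma phi_basis_nth:
  assumes "subfield F" "is_basis F m B" "k < m"
  shows "phi F m B (B ! k) = unit_vec k"
  using phi_lincomb[OF assms(2) unit_vec_in_vecs[OF assms(1,3)]] lincomb_unit_vec[OF assms(3), of B]
  by simp

lemma inj_on_lincomb_snoc:
  assumes sf: "subfield F" and len: "length B = k" and inj: "inj_on (lincomb B k) (vecs F k)"
    and b: "b \<notin> lincomb B k ` vecs F k"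
  shows "inj_on (lincomb (B @ [b]) (Suc k)) (vecs F (Suc k))"
proof (rule inj_onI)
  fix v w assume v: "v \<in> vecs F (Suc k)" and w: "w \<in> vecs F (Suc k)"
    and eq: "lincomb (B @ [b]) (Suc k) v = lincomb (B @ [b]) (Suc k) w"
  define v0 where "v0 = v(k := 0)"
  define w0 where "w0 = w(k := 0)"
  have v0: "v0 \<in> vecs F k" and w0: "w0 \<in> vecs F k"
    using v w by (auto simp: vecs_def v0_def w0_def)
  have eq0: "lincomb B k v0 + v k * b = lincomb B k w0 + w k * b"
    using eq by (simp add: lincomb_snoc len lincomb_upd_last v0_def w0_def)
  have last_eq: "v k = w k"
  proof (rule ccontr)
    assume "v k \<noteq> w k"
    then have d: "w k - v k \<noteq> 0" by simp
    define e where "e = (\<lambda>l. (v0 l - w0 l) / (w k - v k))"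
    have "e \<in> vecs F k"
      using v0 w0 v w by (intro vecsI)
        (auto simp: e_def vecs_in vecs_zero subfield_divide[OF sf] subfield_diff[OF sf])
    moreover have "lincomb B k e = (lincomb B k v0 - lincomb B k w0) / (w k - v k)"
      unfolding lincomb_def e_def
      by (simp add: sum_divide_distrib[symmetric] sum_subtractf[symmetric] left_diff_distrib)
    moreover have "\<dots> = b"
      using eq0 d by (simp add: field_simps)
    ultimately show False
      using b by (metis image_eqI)
  qed
  then have "lincomb B k v0 = lincomb B k w0"
    using eq0 by simp
  then have "v0 = w0"
    using inj v0 w0 by (meson inj_onD)
  then show "v = w"
    using last_eq unfolding v0_def w0_def by (metis fun_upd_triv fun_upd_upd)
qed

lemma exists_inj_on_lincomb:
  fixes F :: "'K::{field,finite} set"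
  assumes sf: "subfield F" and card: "card (UNIV :: 'K set) = card F ^ m"
  shows "k \<le> m \<Longrightarrow> \<exists>B. length B = k \<and> inj_on (lincomb B k) (vecs F k)"
proof (induction k)
  case 0
  then show ?case by (simp add: vecs_0)
next
  case (Suc k)
  then obtain B where len: "length B = k" and inj: "inj_on (lincomb B k) (vecs F k)"
    by auto
  have "2 \<le> card F"
    using card_mono[of F "{0, 1}"] subfield_zero[OF sf] subfield_one[OF sf] by simp
  then have "card (lincomb B k ` vecs F k) < card (UNIV :: 'K set)"
    using card_image[OF inj] card_vecs[of F k] card Suc.prems
    by (simp add: power_strict_increasing)
  then obtain b where "b \<notin> lincomb B k ` vecs F k"
    by (metis UNIV_I less_irrefl subsetI subset_antisym)
  then show ?case
    using inj_on_lincomb_snoc[OF sf len inj] len by (intro exI[of _ "B @ [b]"]) simp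
qed

text \<open>Injectivity suffices: lincomb B m maps vecs F m, of size |F|^m = |K|, into K.\<close>
lemma exists_basis:
  fixes F :: "'K::{field,finite} set"
  assumes sf: "subfield F" and card: "card (UNIV :: 'K set) = card F ^ m"
  shows "\<exists>B. is_basis F m B"
proof -
  obtain B where len: "length B = m" and inj: "inj_on (lincomb B m) (vecs F m)"
    using exists_inj_on_lincomb[OF sf card] by blast
  have "card (lincomb B m ` vecs F m) = card (UNIV :: 'K set)"
    using card_image[OF inj] card_vecs[of F m] card by simp
  then have surj: "lincomb B m ` vecs F m = UNIV"
    by (metis card_subset_eq finite_UNIV subset_UNIV)
  have "\<exists>!c. c \<in> vecs F m \<and> x = (\<Sum>l<m. c l * B ! l)" for x
  proof -
    obtain c where "c \<in> vecs F m" "x = lincomb B m c"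
      using surj by (metis UNIV_I imageE)
    then show ?thesis
      using inj unfolding lincomb_def inj_on_def by metis
  qed
  then show ?thesis
    using len unfolding is_basis_def by blast
qed

lemma GL_q_in_vecs: "GL_q F m g \<Longrightarrow> v \<in> vecs F m \<Longrightarrow> g v \<in> vecs F m"
  unfolding GL_q_def bij_betw_def by blast

lemma GL_q_inj_on: "GL_q F m g \<Longrightarrow> inj_on g (vecs F m)"
  by (simp add: GL_q_def bij_betw_def)

lemma GL_q_zero:
  assumes "subfield F" "GL_q F m g"
  shows "g (\<lambda>_. 0) = (\<lambda>_. 0)"
proof -
  have z: "(\<lambda>_. 0) \<in> vecs F m"
    by (rule zero_in_vecs[OF assms(1)])
  have additive: "\<forall>x\<in>vecs F m. \<forall>y\<in>vecs F m. g (\<lambda>l. x l + y l) = (\<lambda>l. g x l + g y l)"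
    using assms(2) by (simp add: GL_q_def)
  have "g (\<lambda>_. 0) = (\<lambda>l. g (\<lambda>_. 0) l + g (\<lambda>_. 0) l)"
    using additive[rule_format, OF z z] by simp
  then have "g (\<lambda>_. 0) l = g (\<lambda>_. 0) l + g (\<lambda>_. 0) l" for l
    by (metis fun_cong)
  then show ?thesis
    by (metis add_cancel_right_right)
qed

lemma GL_q_phi_scale:
  assumes sf: "subfield F" and B: "is_basis F m B" and g: "GL_q F m g"
    and ga: "g (phi F m B a) = unit_vec k" and \<mu>: "\<mu> \<in> F"
  shows "g (phi F m B (\<mu> * a)) = (\<lambda>l. \<mu> * unit_vec k l)"
  using g \<mu> phi_in_vecs[OF B] ga unfolding phi_scale[OF sf B \<mu>] GL_q_def by auto

lemma GL_q_phi_supported: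
  assumes sf: "subfield F" and B: "is_basis F m B" and g: "GL_q F m g"
    and ga: "g (phi F m B a) = unit_vec k" and k: "k < m"
    and supp: "\<forall>l<m. l \<noteq> k \<longrightarrow> g (phi F m B c) l = 0"
  shows "c = g (phi F m B c) k * a"
proof -
  let ?v = "g (phi F m B c)"
  have v: "?v \<in> vecs F m"
    by (rule GL_q_in_vecs[OF g phi_in_vecs[OF B]])
  then have \<mu>: "?v k \<in> F"
    using k by (rule vecs_in)
  have "?v = (\<lambda>l. ?v k * unit_vec k l)"
  proof
    fix l
    show "?v l = ?v k * unit_vec k l"
      using supp vecs_zero[OF v, of l] by (cases "l < m") (auto simp: unit_vec_def)
  qed
  then have "g (phi F m B c) = g (phi F m B (?v k * a))"
    unfolding GL_q_phi_scale[OF sf B g ga \<mu>] .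
  then have "phi F m B c = phi F m B (?v k * a)"
    using GL_q_inj_on[OF g] phi_in_vecs[OF B] by (meson inj_onD)
  then show ?thesis
    by (rule phi_inj[OF B])
qed

lemma GL_q_phi_hits_unit_vec:
  assumes sf: "subfield F" and B: "is_basis F m B" and g: "GL_q F m g" and k: "k < m"
  shows "\<exists>a. g (phi F m B a) = unit_vec k"
proof -
  have "g ` vecs F m = vecs F m"
    using g unfolding GL_q_def bij_betw_def by blast
  then obtain v where v: "v \<in> vecs F m" "g v = unit_vec k"
    using unit_vec_in_vecs[OF sf k] by (metis imageE)
  then show ?thesis
    by (intro exI[of _ "lincomb B m v"]) (simp add: phi_lincomb[OF B v(1)])
qed

lemma GL_q_phi_unit_vec_nonzero:
  assumes "subfield F" "is_basis F m B" "GL_q F m g" "g (phi F m B a) = unit_vec k"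
  shows "a \<noteq> 0"
proof
  assume "a = 0"
  then have "unit_vec k = (\<lambda>_. 0 :: 'a)"
    using assms(4) phi_zero[OF assms(1,2)] GL_q_zero[OF assms(1,3)] by simp
  then have "unit_vec k k = (0 :: 'a)"
    by simp
  then show False
    by (simp add: unit_vec_def)
qed

lemma GL_q_phi_mult:
  assumes sf: "subfield F" and B: "is_basis F m B" and r: "r \<noteq> 0"
  shows "GL_q F m (\<lambda>v. phi F m B (lincomb B m v * r))"
  unfolding GL_q_def
proof (intro conjI ballI)
  show "bij_betw (\<lambda>v. phi F m B (lincomb B m v * r)) (vecs F m) (vecs F m)"
    by (rule bij_betw_byWitness[where f' = "\<lambda>v. phi F m B (lincomb B m v / r)"])
      (use r in \<open>auto simp: phi_in_vecs[OF B] lincomb_phi[OF B] phi_lincomb[OF B]\<close>)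
next
  fix x y
  show "phi F m B (lincomb B m (\<lambda>l. x l + y l) * r) =
      (\<lambda>l. phi F m B (lincomb B m x * r) l + phi F m B (lincomb B m y * r) l)"
    by (simp add: lincomb_add distrib_right phi_add[OF sf B])
next
  fix a x assume "a \<in> F"
  then show "phi F m B (lincomb B m (\<lambda>l. a * x l) * r) = (\<lambda>l. a * phi F m B (lincomb B m x * r) l)"
    by (simp add: lincomb_scale mult.assoc phi_scale[OF sf B])
qed

text \<open>mon moves block i, after applying f i, to position \<pi> i, where S_u reads coordinate
  u (\<pi> i).\<close>
lemma gen_subfield_subcode_eq_perm_code:
  assumes pi: "\<pi> permutes {..<n}"
  shows "gen_subfield_subcode F m n C B u f \<pi> = perm_code \<pi>
    {(\<lambda>i. if i < n then f i (phi F m B (c i)) (u (\<pi> i)) else 0) | c.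
       c \<in> C \<and> (\<forall>i<n. \<forall>l<m. l \<noteq> u (\<pi> i) \<longrightarrow> f i (phi F m B (c i)) l = 0)}"
proof -
  have pi_inv: "\<pi> (inv \<pi> j) = j" "inv \<pi> (\<pi> j) = j" for j
    using permutes_inverses[OF pi] by auto
  have inv_lt: "inv \<pi> j < n \<longleftrightarrow> j < n" and pi_lt: "\<pi> j < n \<longleftrightarrow> j < n" for j
    using permutes_in_image[OF permutes_inv[OF pi]] permutes_in_image[OF pi] by auto
  have inv_out: "\<not> j < n \<Longrightarrow> inv \<pi> j = j" for j
    using permutes_not_in[OF permutes_inv[OF pi]] by simp
  define X where "X c = mon n f \<pi> (\<lambda>j. if j < n then phi F m B (c j) else (\<lambda>_. 0))" for c
  define r where "r c = (\<lambda>i. if i < n then f i (phi F m B (c i)) (u (\<pi> i)) else 0)" for c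
  define P where "P c \<longleftrightarrow> (\<forall>i<n. \<forall>l<m. l \<noteq> u (\<pi> i) \<longrightarrow> f i (phi F m B (c i)) l = 0)" for c
  have X: "X c j = f (inv \<pi> j) (phi F m B (c (inv \<pi> j)))" if "j < n" for c j
    using that inv_lt by (simp add: X_def mon_def)
  have supp_iff: "(\<forall>j<n. \<forall>l<m. l \<noteq> u j \<longrightarrow> X c j l = 0) \<longleftrightarrow> P c" for c
    unfolding P_def by (metis X pi_inv inv_lt pi_lt)
  have read: "(\<lambda>j. if j < n then X c j (u j) else 0) = r c \<circ> inv \<pi>" for c
    by (rule ext) (simp add: X r_def pi_inv inv_lt inv_out)
  have "gen_subfield_subcode F m n C B u f \<pi> =
      {(\<lambda>j. if j < n then X c j (u j) else 0) | c. c \<in> C \<and> (\<forall>j<n. \<forall>l<m. l \<noteq> u j \<longrightarrow> X c j l = 0)}"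
    unfolding gen_subfield_subcode_def S_u_def Im_q_def X_def by blast
  also have "\<dots> = perm_code \<pi> {r c | c. c \<in> C \<and> P c}"
    unfolding perm_code_def supp_iff read by blast
  finally show ?thesis
    unfolding r_def P_def .
qed

lemma selected_coordinates_eq_scaled_code:
  assumes sf: "subfield F" and B: "is_basis F m B" and C: "C \<subseteq> vecs UNIV n"
    and f: "\<forall>i<n. GL_q F m (f i)" and k: "\<forall>i<n. k i < m"
    and a: "\<forall>i<n. f i (phi F m B (a i)) = unit_vec (k i)"
  shows "{(\<lambda>i. if i < n then f i (phi F m B (c i)) (k i) else 0) | c.
            c \<in> C \<and> (\<forall>i<n. \<forall>l<m. l \<noteq> k i \<longrightarrow> f i (phi F m B (c i)) l = 0)}
         = scaled_code F n C a"
proof (intro set_eqI iffI)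
  fix v
  assume "v \<in> {(\<lambda>i. if i < n then f i (phi F m B (c i)) (k i) else 0) | c.
            c \<in> C \<and> (\<forall>i<n. \<forall>l<m. l \<noteq> k i \<longrightarrow> f i (phi F m B (c i)) l = 0)}"
  then obtain c where c: "c \<in> C" and v: "v = (\<lambda>i. if i < n then f i (phi F m B (c i)) (k i) else 0)"
    and supp: "\<forall>i<n. \<forall>l<m. l \<noteq> k i \<longrightarrow> f i (phi F m B (c i)) l = 0"
    by blast
  have c_vecs: "c \<in> vecs UNIV n"
    using c C by blast
  have c_eq: "c = (\<lambda>i. v i * a i)"
  proof
    fix i
    show "c i = v i * a i"
      using GL_q_phi_supported[OF sf B, of "f i" "a i" "k i" "c i"] f a k supp vecs_zero[OF c_vecs]
      by (cases "i < n") (auto simp: v)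
  qed
  have v_vecs: "v \<in> vecs F n"
  proof (rule vecsI)
    fix i assume i: "i < n"
    then have "f i (phi F m B (c i)) \<in> vecs F m"
      using GL_q_in_vecs[OF _ phi_in_vecs[OF B]] f by blast
    then show "v i \<in> F"
      using k i by (simp add: v vecs_in)
  qed (simp add: v)
  then have "c \<in> V_prod F n a"
    using c_vecs c_eq vecs_in[OF v_vecs] by (auto simp: V_prod_def)
  then show "v \<in> scaled_code F n C a"
    using v_vecs c c_eq by (simp add: scaled_code_def)
next
  fix v
  assume "v \<in> scaled_code F n C a"
  then have v: "v \<in> vecs F n" and c: "(\<lambda>i. v i * a i) \<in> C"
    unfolding scaled_code_def by auto
  have img: "f i (phi F m B (v i * a i)) = (\<lambda>l. v i * unit_vec (k i) l)" if "i < n" for i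
    using GL_q_phi_scale[OF sf B] f a vecs_in[OF v] that by blast
  have read: "v = (\<lambda>i. if i < n then f i (phi F m B (v i * a i)) (k i) else 0)"
    using img vecs_zero[OF v] by (auto simp: unit_vec_def)
  have supp: "\<forall>i<n. \<forall>l<m. l \<noteq> k i \<longrightarrow> f i (phi F m B (v i * a i)) l = 0"
    using img by (simp add: unit_vec_def)
  show "v \<in> {(\<lambda>i. if i < n then f i (phi F m B (c i)) (k i) else 0) | c.
            c \<in> C \<and> (\<forall>i<n. \<forall>l<m. l \<noteq> k i \<longrightarrow> f i (phi F m B (c i)) l = 0)}"
    by (rule CollectI, rule exI[of _ "\<lambda>i. v i * a i"]) (intro conjI read c supp)
qed

lemma gen_subfield_subcode_eq_perm_scaled_code:
  assumes sf: "subfield F" and B: "is_basis F m B" and u: "\<forall>j<n. u j < m"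
    and f: "\<forall>j<n. GL_q F m (f j)" and pi: "\<pi> permutes {..<n}" and C: "linear_code n C"
    and a: "\<forall>i<n. f i (phi F m B (a i)) = unit_vec (u (\<pi> i))"
  shows "gen_subfield_subcode F m n C B u f \<pi> = perm_code \<pi> (scaled_code F n C a)"
proof -
  have k: "\<forall>i<n. u (\<pi> i) < m"
    using u permutes_in_image[OF pi] by simp
  have Cv: "C \<subseteq> vecs UNIV n"
    using C by (simp add: linear_code_def)
  show ?thesis
    unfolding gen_subfield_subcode_eq_perm_code[OF pi]
      selected_coordinates_eq_scaled_code[OF sf B Cv f k a] ..
qed

lemma gen_subfield_subcode_is_perm_scaled_code:
  assumes sf: "subfield F" and B: "is_basis F m B" and u: "\<forall>j<n. u j < m"
    and f: "\<forall>j<n. GL_q F m (f j)" and pi: "\<pi> permutes {..<n}" and C: "linear_code n C"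
  obtains a where "\<forall>i<n. a i \<noteq> 0"
    and "gen_subfield_subcode F m n C B u f \<pi> = perm_code \<pi> (scaled_code F n C a)"
proof -
  have "\<exists>c. f i (phi F m B c) = unit_vec (u (\<pi> i))" if "i < n" for i
    using GL_q_phi_hits_unit_vec[OF sf B] f u permutes_in_image[OF pi] that by simp
  then obtain a where a: "\<forall>i<n. f i (phi F m B (a i)) = unit_vec (u (\<pi> i))"
    by metis
  then have "\<forall>i<n. a i \<noteq> 0"
    using GL_q_phi_unit_vec_nonzero[OF sf B] f by blast
  then show ?thesis
    using that gen_subfield_subcode_eq_perm_scaled_code[OF sf B u f pi C a] by blast
qed

lemma perm_scaled_code_is_gen_subfield_subcode:
  fixes F :: "'K::{field,finite} set"
  assumes sf: "subfield F" and card: "card (UNIV :: 'K set) = card F ^ m"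
    and C: "linear_code n C" and pi: "\<pi> permutes {..<n}" and a: "\<forall>i<n. a i \<noteq> 0"
  obtains B u f where "is_basis F m B" "\<forall>j<n. u j < m" "\<forall>j<n. GL_q F m (f j)"
    and "gen_subfield_subcode F m n C B u f \<pi> = perm_code \<pi> (scaled_code F n C a)"
proof -
  obtain B where B: "is_basis F m B"
    using exists_basis[OF sf card] by blast
  have "m \<noteq> 0"
  proof
    assume "m = 0"
    then have "card (UNIV :: 'K set) = 1"
      using card by simp
    moreover have "card {0 :: 'K, 1} \<le> card (UNIV :: 'K set)"
      by (rule card_mono) auto
    ultimately show False
      by simp
  qed
  then have B0: "phi F m B (B ! 0) = unit_vec 0"
    using phi_basis_nth[OF sf B] by simp
  then have "B ! 0 \<noteq> 0"
    using GL_q_phi_unit_vec_nonzero[OF sf B, of id] by (simp add: GL_q_def)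
  define g where "g j v = phi F m B (lincomb B m v * (B ! 0 / a j))" for j v
  have g: "\<forall>j<n. GL_q F m (g j)"
    using GL_q_phi_mult[OF sf B] a \<open>B ! 0 \<noteq> 0\<close> unfolding g_def by (metis divide_eq_0_iff)
  have "\<forall>i<n. g i (phi F m B (a i)) = unit_vec ((\<lambda>_. 0) (\<pi> i))"
    using a B0 by (simp add: g_def lincomb_phi[OF B])
  then have "gen_subfield_subcode F m n C B (\<lambda>_. 0) g \<pi> = perm_code \<pi> (scaled_code F n C a)"
    using gen_subfield_subcode_eq_perm_scaled_code[OF sf B _ g pi C] \<open>m \<noteq> 0\<close> by simp
  then show ?thesis
    using that[OF B _ g, of "\<lambda>_. 0"] \<open>m \<noteq> 0\<close> by simp
qed

theorem proposition8:
  fixes F :: "'K::{field,finite} set" and m n :: nat and C :: "(nat \<Rightarrow> 'K) set"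
  assumes "subfield F"
    and "card (UNIV :: 'K set) = card F ^ m"
    and "linear_code n C"
  shows "{gen_subfield_subcode F m n C B u f \<pi> | B u f \<pi>.
            is_basis F m B \<and> (\<forall>j<n. u j < m) \<and> (\<forall>j<n. GL_q F m (f j)) \<and> \<pi> permutes {..<n}}
       = {perm_code \<pi> (scaled_code F n C a) | a \<pi>.
            (\<forall>i<n. a i \<noteq> 0) \<and> \<pi> permutes {..<n}}"
proof (intro set_eqI iffI)
  fix X
  assume "X \<in> {gen_subfield_subcode F m n C B u f \<pi> | B u f \<pi>.
            is_basis F m B \<and> (\<forall>j<n. u j < m) \<and> (\<forall>j<n. GL_q F m (f j)) \<and> \<pi> permutes {..<n}}"
  then obtain B u f \<pi> where X: "X = gen_subfield_subcode F m n C B u f \<pi>" and B: "is_basis F m B"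
    and u: "\<forall>j<n. u j < m" and f: "\<forall>j<n. GL_q F m (f j)" and pi: "\<pi> permutes {..<n}"
    by blast
  obtain a where "\<forall>i<n. a i \<noteq> 0" "X = perm_code \<pi> (scaled_code F n C a)"
    using gen_subfield_subcode_is_perm_scaled_code[OF assms(1) B u f pi assms(3)] unfolding X .
  then show "X \<in> {perm_code \<pi> (scaled_code F n C a) | a \<pi>. (\<forall>i<n. a i \<noteq> 0) \<and> \<pi> permutes {..<n}}"
    using pi by blast
next
  fix X
  assume "X \<in> {perm_code \<pi> (scaled_code F n C a) | a \<pi>. (\<forall>i<n. a i \<noteq> 0) \<and> \<pi> permutes {..<n}}"
  then obtain a \<pi> where X: "X = perm_code \<pi> (scaled_code F n C a)"
    and a: "\<forall>i<n. a i \<noteq> 0" and pi: "\<pi> permutes {..<n}"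
    by blast
  obtain B u f where "is_basis F m B" "\<forall>j<n. u j < m" "\<forall>j<n. GL_q F m (f j)"
    "gen_subfield_subcode F m n C B u f \<pi> = X"
    using perm_scaled_code_is_gen_subfield_subcode[OF assms pi a] unfolding X .
  then show "X \<in> {gen_subfield_subcode F m n C B u f \<pi> | B u f \<pi>.
            is_basis F m B \<and> (\<forall>j<n. u j < m) \<and> (\<forall>j<n. GL_q F m (f j)) \<and> \<pi> permutes {..<n}}"
    using pi by blast
qed

end
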